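(* Let $(a_n),(b_n)$ be defined by $a_n=2a_{n-1}b_{n-1}$, $b_n=a_{n-1}^2$ for $n\ge2$, with $a_1=2$, $b_1=1$. Then this SNRE is of the dominating type.
   Context: An SNRE $\{a_n,b_n\}$ on two symbols is of the dominating type if it admits a dominate symbol, i.e. either $a_n\ge b_n$ for all $n\in\mathbb{N}$ or $b_n\ge a_n$ for all $n\in\mathbb{N}$. *)

theory Defs
  imports Main
begin

definition dominating_type :: "(nat \<Rightarrow> nat) \<Rightarrow> (nat \<Rightarrow> nat) \<Rightarrow> bool" where
  "dominating_type a b \<longleftrightarrow> (\<forall>n\<ge>1. a n \<ge> b n) \<or> (\<forall>n\<ge>1. b n \<ge> a n)"

end

theory Submission
  imports Defs
begin

text \<open>The invariant b \<le> a \<le> 2b is preserved by (a, b) \<mapsto> (2ab, a^2): multiplying it by a gives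
  a^2 \<le> 2ab \<le> 2a^2. It holds at n = 1, so a dominates b throughout.\<close>

lemma doubling_step_preserves_bounds:
  fixes x y :: nat
  assumes "y \<le> x" and "x \<le> 2 * y"
  shows "x ^ 2 \<le> 2 * x * y" and "2 * x * y \<le> 2 * x ^ 2"
proof -
  have "x * x \<le> x * (2 * y)" using assms(2) by (rule mult_le_mono2)
  then show "x ^ 2 \<le> 2 * x * y" by (simp add: power2_eq_square ac_simps)
  have "x * y \<le> x * x" using assms(1) by (rule mult_le_mono2)
  then show "2 * x * y \<le> 2 * x ^ 2" by (simp add: power2_eq_square ac_simps)
qed

theorem lemma3:
  fixes a b :: "nat \<Rightarrow> nat"
  assumes "a 1 = 2" and "b 1 = 1"
    and "\<And>n. n \<ge> 2 \<Longrightarrow> a n = 2 * a (n - 1) * b (n - 1)"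
    and "\<And>n. n \<ge> 2 \<Longrightarrow> b n = a (n - 1) ^ 2"
  shows "dominating_type a b"
proof -
  have "b n \<le> a n \<and> a n \<le> 2 * b n" if "n \<ge> 1" for n
    using that
  proof (induction n rule: dec_induct)
    case base
    then show ?case using assms(1,2) by simp
  next
    case (step m)
    have "a (Suc m) = 2 * a m * b m" and "b (Suc m) = a m ^ 2"
      using assms(3,4)[of "Suc m"] step.hyps by simp_all
    then show ?case
      using doubling_step_preserves_bounds[of "b m" "a m"] step.IH by simp
  qed
  then show ?thesis unfolding dominating_type_def by blast
qed

end
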